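(* Let $k\ge1$ be an integer, $\mathbf G$ an abelian group, $A,C\subseteq\mathbf G$ finite and $B\subseteq\mathbf G^k$ finite. Then $$|A|\cdot|B+\Delta(C)|\le|B+\Delta(A)|\cdot|A+C|.$$
   Context: $\Delta(S)=\{(s,\dots,s)\in\mathbf G^k:s\in S\}$ for $S\subseteq\mathbf G$; sums of subsets of $\mathbf G^k$ are coordinatewise. *)

theory Defs
  imports "HOL-Analysis.Analysis"
begin

definition sumset :: "'a::ab_group_add set \<Rightarrow> 'a set \<Rightarrow> 'a set" where
  "sumset X Y = {x + y | x y. x \<in> X \<and> y \<in> Y}"

definition diag :: "'a set \<Rightarrow> ('a ^ 'k) set" where
  "diag S = {(\<chi> i. s) | s. s \<in> S}"

end

theory Submission
  imports Defs
begin

text \<open>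
  Petridis' argument, for sums of the form \<open>B + f(X)\<close> with \<open>f\<close> an additive map (the diagonal
  embedding being one).  Choose a nonempty \<open>X \<subseteq> A\<close> minimising \<open>K = |B + f(X)| / |X|\<close>.  Adding
  the elements of \<open>C\<close> one at a time shows \<open>|B + f(X + C)| \<le> K |X + C|\<close>: a new element \<open>c\<close>
  enlarges \<open>X + C\<close> by the translates \<open>x + c\<close> with \<open>x\<close> outside
  \<open>Y = {x \<in> X. x + c \<in> X + C}\<close>, and enlarges \<open>B + f(X + C)\<close> by at most
  \<open>|B + f(X)| - |B + f(Y)| \<le> K(|X| - |Y|)\<close> by minimality.  Since \<open>B + f(C)\<close> embeds into
  \<open>B + f(X + C)\<close> by a translation and \<open>K \<le> |B + f(A)| / |A|\<close>, the inequality follows.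
\<close>

lemma sumset_iff: "v \<in> sumset X Y \<longleftrightarrow> (\<exists>x\<in>X. \<exists>y\<in>Y. v = x + y)"
  unfolding sumset_def by blast

lemma sumset_eq_image: "sumset X Y = (\<lambda>(x, y). x + y) ` (X \<times> Y)"
  unfolding sumset_def by auto

lemma finite_sumset: "finite X \<Longrightarrow> finite Y \<Longrightarrow> finite (sumset X Y)"
  unfolding sumset_eq_image by simp

lemma sumset_mono: "X \<subseteq> X' \<Longrightarrow> Y \<subseteq> Y' \<Longrightarrow> sumset X Y \<subseteq> sumset X' Y'"
  unfolding sumset_def by blast

lemma sumset_insert_right:
  "sumset X (insert c C) = sumset X C \<union> (\<lambda>x. x + c) ` X"
  unfolding sumset_def by blast

lemma card_sumset_insert_right:
  assumes "finite X" "finite C"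
  shows "card (sumset X (insert c C)) = card (sumset X C) + card (X - {x \<in> X. x + c \<in> sumset X C})"
proof -
  let ?N = "X - {x \<in> X. x + c \<in> sumset X C}"
  have "sumset X (insert c C) = sumset X C \<union> (\<lambda>x. x + c) ` ?N"
    unfolding sumset_insert_right by blast
  moreover have "sumset X C \<inter> (\<lambda>x. x + c) ` ?N = {}" by blast
  moreover have "card ((\<lambda>x. x + c) ` ?N) = card ?N" by (simp add: card_image)
  ultimately show ?thesis
    using assms by (simp add: card_Un_disjoint finite_sumset)
qed

lemma (in additive) sumset_image_add:
  "sumset B (f ` sumset X C) = {b + f x + f c | b x c. b \<in> B \<and> x \<in> X \<and> c \<in> C}"
  unfolding sumset_def by (force simp: add add.assoc)

lemma (in additive) card_sumset_image_insert_right_le: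
  fixes B :: "'b set" and c :: 'a
  assumes "finite B" "finite X" "finite C"
  defines "Y \<equiv> {x \<in> X. x + c \<in> sumset X C}"
  shows "card (sumset B (f ` sumset X (insert c C))) + card (sumset B (f ` Y))
           \<le> card (sumset B (f ` sumset X C)) + card (sumset B (f ` X))"
proof -
  let ?S = "sumset B (f ` sumset X C)"
  let ?T = "\<lambda>v. v + f c"
  have YX: "Y \<subseteq> X" unfolding Y_def by blast
  have fin: "finite (sumset B (f ` X))" "finite ?S"
    using assms by (simp_all add: finite_sumset)
  have BY_BX: "sumset B (f ` Y) \<subseteq> sumset B (f ` X)"
    using YX by (intro sumset_mono) auto
  have shifted_Y: "?T v \<in> ?S" if v: "v \<in> sumset B (f ` Y)" for v
  proof -
    obtain b y where "b \<in> B" "y \<in> Y" "v = b + f y"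
      using v unfolding sumset_def by blast
    moreover from \<open>y \<in> Y\<close> obtain x' c' where "x' \<in> X" "c' \<in> C" "y + c = x' + c'"
      unfolding Y_def sumset_iff by blast
    ultimately have "?T v = b + f x' + f c'"
      by (metis add add.assoc)
    then show ?thesis
      using \<open>b \<in> B\<close> \<open>x' \<in> X\<close> \<open>c' \<in> C\<close> unfolding sumset_image_add by blast
  qed
  have "sumset B (f ` sumset X (insert c C))
          \<subseteq> ?S \<union> ?T ` (sumset B (f ` X) - sumset B (f ` Y))"
  proof
    fix v assume "v \<in> sumset B (f ` sumset X (insert c C))"
    then obtain b x d where bxd: "b \<in> B" "x \<in> X" "d \<in> insert c C" "v = b + f x + f d"
      unfolding sumset_image_add by blast
    show "v \<in> ?S \<union> ?T ` (sumset B (f ` X) - sumset B (f ` Y))"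
    proof (cases "d \<in> C \<or> b + f x \<in> sumset B (f ` Y)")
      case True
      then show ?thesis
        using bxd shifted_Y unfolding sumset_image_add by auto
    next
      case False
      then have "b + f x \<in> sumset B (f ` X) - sumset B (f ` Y)" "d = c"
        using bxd by (auto simp: sumset_iff)
      then show ?thesis using bxd by auto
    qed
  qed
  then have "card (sumset B (f ` sumset X (insert c C)))
               \<le> card ?S + card (?T ` (sumset B (f ` X) - sumset B (f ` Y)))"
    by (meson card_Un_le card_mono fin finite_Diff finite_UnI finite_imageI order_trans)
  also have "card (?T ` (sumset B (f ` X) - sumset B (f ` Y)))
               = card (sumset B (f ` X)) - card (sumset B (f ` Y))"
    using fin BY_BX by (simp add: card_image card_Diff_subset finite_subset)
  finally show ?thesis
    using card_mono[OF fin(1) BY_BX] by linarith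
qed

lemma (in additive) petridis:
  fixes B :: "'b set" and K :: real
  assumes "finite B" "finite X" "finite C"
    and ratio_X: "card (sumset B (f ` X)) = K * card X"
    and ratio_min: "\<And>Z. Z \<subseteq> X \<Longrightarrow> K * card Z \<le> card (sumset B (f ` Z))"
  shows "card (sumset B (f ` sumset X C)) \<le> K * card (sumset X C)"
  using \<open>finite C\<close>
proof (induction C rule: finite_induct)
  case empty
  then show ?case by (simp add: sumset_def)
next
  case (insert c C)
  define Y where "Y = {x \<in> X. x + c \<in> sumset X C}"
  have YX: "Y \<subseteq> X" unfolding Y_def by blast
  have "real (card (sumset B (f ` sumset X (insert c C)))) + card (sumset B (f ` Y))
          \<le> card (sumset B (f ` sumset X C)) + card (sumset B (f ` X))"
    using card_sumset_image_insert_right_le[OF assms(1,2) \<open>finite C\<close>, of c]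
    unfolding Y_def[symmetric] by linarith
  moreover have "K * card (sumset X (insert c C)) = K * card (sumset X C) + K * card X - K * card Y"
    using card_sumset_insert_right[OF \<open>finite X\<close> \<open>finite C\<close>, of c]
      card_Diff_subset[OF finite_subset[OF YX \<open>finite X\<close>] YX] card_mono[OF \<open>finite X\<close> YX]
    unfolding Y_def[symmetric] by (simp add: of_nat_diff algebra_simps)
  ultimately show ?case
    using insert.IH ratio_X ratio_min[OF YX] by linarith
qed

lemma (in additive) card_sumset_image_le_translate:
  assumes "finite B" "finite X" "finite C" "x \<in> X"
  shows "card (sumset B (f ` C)) \<le> card (sumset B (f ` sumset X C))"
proof -
  have "(\<lambda>v. v + f x) ` sumset B (f ` C) \<subseteq> sumset B (f ` sumset X C)"
  proof
    fix w assume "w \<in> (\<lambda>v. v + f x) ` sumset B (f ` C)"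
    then obtain b c where "b \<in> B" "c \<in> C" "w = b + f x + f c"
      unfolding sumset_def by (auto simp: algebra_simps)
    then show "w \<in> sumset B (f ` sumset X C)"
      using \<open>x \<in> X\<close> unfolding sumset_image_add by blast
  qed
  then have "card ((\<lambda>v. v + f x) ` sumset B (f ` C)) \<le> card (sumset B (f ` sumset X C))"
    using assms by (intro card_mono) (simp_all add: finite_sumset)
  then show ?thesis by (simp add: card_image)
qed

lemma ex_subset_min_ratio:
  fixes g :: "'a set \<Rightarrow> real"
  assumes "finite A" "A \<noteq> {}"
  obtains X where "X \<subseteq> A" "X \<noteq> {}"
    "\<And>Z. Z \<subseteq> A \<Longrightarrow> Z \<noteq> {} \<Longrightarrow> g X / card X \<le> g Z / card Z"
proof -
  have "finite {X. X \<subseteq> A \<and> X \<noteq> {}}" "{X. X \<subseteq> A \<and> X \<noteq> {}} \<noteq> {}"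
    using assms by auto
  from ex_is_arg_min_if_finite[OF this, of "\<lambda>X. g X / card X"] that show ?thesis
    unfolding is_arg_min_linorder by blast
qed

theorem (in additive) card_mult_sumset_image_le:
  fixes B :: "'b set"
  assumes "finite A" "finite C" "finite B"
  shows "card A * card (sumset B (f ` C)) \<le> card (sumset B (f ` A)) * card (sumset A C)"
proof (cases "A = {}")
  case False
  let ?ratio = "\<lambda>X. real (card (sumset B (f ` X))) / card X"
  obtain X where XA: "X \<subseteq> A" and "X \<noteq> {}"
    and X_min: "\<And>Z. Z \<subseteq> A \<Longrightarrow> Z \<noteq> {} \<Longrightarrow> ?ratio X \<le> ?ratio Z"
    using ex_subset_min_ratio[OF \<open>finite A\<close> False, of "\<lambda>X. card (sumset B (f ` X))"] by blast
  then obtain x where "x \<in> X" by blast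
  have "finite X" using XA \<open>finite A\<close> finite_subset by blast
  have ratio_min: "?ratio X * card Z \<le> card (sumset B (f ` Z))" if "Z \<subseteq> X" for Z
  proof (cases "Z = {}")
    case False
    then have "card Z > 0" using that \<open>finite X\<close> by (simp add: card_gt_0_iff finite_subset)
    with X_min[of Z] show ?thesis using that XA False by (simp add: pos_le_divide_eq)
  qed simp
  have "card X > 0" using \<open>finite X\<close> \<open>X \<noteq> {}\<close> by (simp add: card_gt_0_iff)
  then have ratio_X: "card (sumset B (f ` X)) = ?ratio X * card X" by simp
  have "real (card (sumset B (f ` C))) \<le> card (sumset B (f ` sumset X C))"
    using card_sumset_image_le_translate[OF \<open>finite B\<close> \<open>finite X\<close> \<open>finite C\<close> \<open>x \<in> X\<close>] by simp
  also have "\<dots> \<le> ?ratio X * card (sumset X C)"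
    using petridis[OF \<open>finite B\<close> \<open>finite X\<close> \<open>finite C\<close> ratio_X ratio_min] .
  also have "\<dots> \<le> ?ratio X * card (sumset A C)"
    using XA assms by (intro mult_left_mono of_nat_mono card_mono finite_sumset sumset_mono) auto
  also have "\<dots> \<le> ?ratio A * card (sumset A C)"
    using X_min[of A] False by (intro mult_right_mono) simp_all
  finally have "real (card A) * card (sumset B (f ` C)) \<le> card (sumset B (f ` A)) * card (sumset A C)"
    using False \<open>finite A\<close> by (simp add: field_simps card_gt_0_iff)
  then show ?thesis by (metis of_nat_le_iff of_nat_mult)
qed simp

lemma additive_const_vec: "Modules.additive (\<lambda>s. \<chi> i. s :: 'a::ab_group_add ^ 'k)"
  by (rule Modules.additive.intro) (simp add: vec_eq_iff)

lemma diag_eq_image: "diag S = (\<lambda>s. \<chi> i. s) ` S"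
  unfolding diag_def by blast

theorem corollary36:
  fixes A C :: "'a::ab_group_add set" and B :: "('a ^ 'k) set"
  assumes "finite A" and "finite C" and "finite B"
  shows "card A * card (sumset B (diag C)) \<le> card (sumset B (diag A)) * card (sumset A C)"
  unfolding diag_eq_image
  using additive.card_mult_sumset_image_le[OF additive_const_vec assms] .

end
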